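(* Let $S$ be an average $\tau$-mutation system with $\tau>1$ and starting word of length $m$, and let $Y_n=|S(n)|$. Then there is a constant $C_0$ such that for all $n\ge1$, \[\frac{1}{(n(\tau-1)+m)^2}\,\mathbb{E}\Big[\big(Y_n-n(\tau-1)-m\big)^2\Big]\le\frac{C_0}{n}.\]
   Context: Let $\mathcal{A}=\{a_0,\dots,a_{d-1}\}$. A mutation law assigns to each $a_t$ a finitely supported probability distribution $\mathbb{P}_{a_t}$ on the finite nonempty words over $\mathcal{A}$; $\vartheta(a_t)$ is a random word with law $\mathbb{P}_{a_t}$; it is an average $\tau$-mutation law if $\mathbb{E}|\vartheta(a_t)|=\tau$ for all $t$. A mutation step on $w=w_0\cdots w_{m-1}$ picks $i$ uniformly in $\{0,\dots,m-1\}$ and replaces $w_i$ by an independent sample of $\vartheta(w_i)$. The system is $S(0)=w$, $S(n)=\vartheta(S(n-1))$ with independent randomness at each step. *)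

theory Defs
  imports "HOL-Probability.Probability"
begin

definition mutation_law :: "('a \<Rightarrow> 'a list pmf) \<Rightarrow> bool" where
  "mutation_law P \<longleftrightarrow> (\<forall>a. finite (set_pmf (P a)) \<and> (\<forall>v \<in> set_pmf (P a). v \<noteq> []))"

definition avg_mutation_law :: "real \<Rightarrow> ('a \<Rightarrow> 'a list pmf) \<Rightarrow> bool" where
  "avg_mutation_law \<tau> P \<longleftrightarrow> mutation_law P \<and>
     (\<forall>a. measure_pmf.expectation (P a) (\<lambda>v. real (length v)) = \<tau>)"

definition mutation_step :: "('a \<Rightarrow> 'a list pmf) \<Rightarrow> 'a list \<Rightarrow> 'a list pmf" where
  "mutation_step P w =
     bind_pmf (pmf_of_set {0..<length w})
       (\<lambda>i. map_pmf (\<lambda>v. take i w @ v @ drop (Suc i) w) (P (w ! i)))"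

definition mutation_system :: "('a \<Rightarrow> 'a list pmf) \<Rightarrow> 'a list \<Rightarrow> nat \<Rightarrow> 'a list pmf" where
  "mutation_system P w n = ((\<lambda>p. bind_pmf p (mutation_step P)) ^^ n) (return_pmf w)"

end

theory Submission
  imports Defs
begin

text \<open>Let \<open>\<mu>\<^sub>n = n(\<tau> - 1) + m\<close>, the mean of \<open>|S(n)|\<close>. A mutation step replaces one
  letter \<open>a\<close> by \<open>\<theta>(a)\<close>, so it adds \<open>|\<theta>(a)| - 1\<close> to the length; since \<open>\<mu>\<^sub>n\<close> grows by
  exactly the mean \<open>\<tau> - 1\<close> of this increment, the mean square deviation \<open>E (|S(n)| - \<mu>\<^sub>n)\<^sup>2\<close>
  grows in each step by at most the largest letter variance \<open>\<sigma>\<^sup>2\<close> of \<open>|\<theta>(a)|\<close>. Hence it is at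
  most \<open>n \<sigma>\<^sup>2\<close>, and dividing by \<open>\<mu>\<^sub>n\<^sup>2 \<ge> n\<^sup>2 (\<tau> - 1)\<^sup>2\<close> gives the bound with
  \<open>C\<^sub>0 = \<sigma>\<^sup>2 / (\<tau> - 1)\<^sup>2\<close>.\<close>

lemma expectation_bind_pmf_finite:
  fixes f :: "'b \<Rightarrow> real"
  assumes "finite (set_pmf p)" and "\<And>x. x \<in> set_pmf p \<Longrightarrow> finite (set_pmf (N x))"
    and "\<And>y. 0 \<le> f y"
  shows "measure_pmf.expectation (bind_pmf p N) f =
           measure_pmf.expectation p (\<lambda>x. measure_pmf.expectation (N x) f)"
proof -
  have "finite (set_pmf (bind_pmf p N))" using assms(1,2) by (simp add: set_bind_pmf)
  then have "ennreal (measure_pmf.expectation (bind_pmf p N) f) = (\<integral>\<^sup>+y. f y \<partial>bind_pmf p N)"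
    by (intro nn_integral_eq_integral[symmetric] integrable_measure_pmf_finite) (simp_all add: assms(3))
  also have "\<dots> = (\<integral>\<^sup>+x. \<integral>\<^sup>+y. f y \<partial>N x \<partial>p)" by simp
  also have "\<dots> = (\<integral>\<^sup>+x. measure_pmf.expectation (N x) f \<partial>p)"
    using assms by (intro nn_integral_cong_AE)
      (auto simp: AE_measure_pmf_iff intro!: nn_integral_eq_integral integrable_measure_pmf_finite)
  also have "\<dots> = measure_pmf.expectation p (\<lambda>x. measure_pmf.expectation (N x) f)"
    using assms by (auto intro!: nn_integral_eq_integral integrable_measure_pmf_finite)
  finally show ?thesis
    using assms(3) by (simp add: integral_nonneg_AE)
qed

lemma expectation_square_shift:
  fixes f :: "'b \<Rightarrow> real"
  assumes "finite (set_pmf p)" and "measure_pmf.expectation p f = \<mu>"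
  shows "measure_pmf.expectation p (\<lambda>x. (c + f x - \<mu>)\<^sup>2) =
           c\<^sup>2 + measure_pmf.expectation p (\<lambda>x. (f x - \<mu>)\<^sup>2)"
proof -
  have "(\<lambda>x. (c + f x - \<mu>)\<^sup>2) = (\<lambda>x. c\<^sup>2 + 2 * c * (f x - \<mu>) + (f x - \<mu>)\<^sup>2)"
    by (auto simp: power2_eq_square algebra_simps)
  then show ?thesis
    using assms by (simp add: integrable_measure_pmf_finite integral_diff)
qed

lemma mutation_step_nonempty:
  assumes "mutation_law P" and "v \<noteq> []" and "u \<in> set_pmf (mutation_step P v)"
  shows "u \<noteq> []"
  using assms by (auto simp: mutation_step_def mutation_law_def)

lemma finite_set_pmf_mutation_step:
  assumes "mutation_law P" and "v \<noteq> []"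
  shows "finite (set_pmf (mutation_step P v))"
  using assms unfolding mutation_step_def mutation_law_def by auto

lemma mutation_system_Suc:
  "mutation_system P w (Suc n) = bind_pmf (mutation_system P w n) (mutation_step P)"
  unfolding mutation_system_def by simp

lemma mutation_system_nonempty:
  assumes "mutation_law P" and "w \<noteq> []" and "v \<in> set_pmf (mutation_system P w n)"
  shows "v \<noteq> []"
  using assms(3)
proof (induction n arbitrary: v)
  case 0
  then show ?case using assms(2) by (simp add: mutation_system_def)
next
  case (Suc n)
  then obtain v' where "v' \<in> set_pmf (mutation_system P w n)" "v \<in> set_pmf (mutation_step P v')"
    by (auto simp: mutation_system_Suc)
  then show ?case using Suc.IH mutation_step_nonempty[OF assms(1)] by blast
qed

lemma finite_set_pmf_mutation_system:
  assumes "mutation_law P" and "w \<noteq> []"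
  shows "finite (set_pmf (mutation_system P w n))"
proof (induction n)
  case 0
  then show ?case by (simp add: mutation_system_def)
next
  case (Suc n)
  then show ?case
    using finite_set_pmf_mutation_step[OF assms(1)] mutation_system_nonempty[OF assms]
    by (auto simp: mutation_system_Suc set_bind_pmf)
qed

lemma mutation_step_mean_square:
  assumes law: "avg_mutation_law \<tau> P"
    and var: "\<And>a. measure_pmf.expectation (P a) (\<lambda>s. (real (length s) - \<tau>)\<^sup>2) \<le> \<sigma>2"
    and "v \<noteq> []"
  shows "measure_pmf.expectation (mutation_step P v) (\<lambda>u. (real (length u) - d)\<^sup>2)
           \<le> (real (length v) + (\<tau> - 1) - d)\<^sup>2 + \<sigma>2"
proof -
  have fin: "\<And>a. finite (set_pmf (P a))"
    and mean: "\<And>a. measure_pmf.expectation (P a) (\<lambda>s. real (length s)) = \<tau>"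
    using law by (auto simp: avg_mutation_law_def mutation_law_def)
  define I where "I = {0..<length v}"
  have I: "finite I" "I \<noteq> {}" using \<open>v \<noteq> []\<close> by (auto simp: I_def)
  let ?c = "real (length v) + (\<tau> - 1) - d"
  have letter: "measure_pmf.expectation (P (v ! i))
                  (\<lambda>s. (real (length (take i v @ s @ drop (Suc i) v)) - d)\<^sup>2) \<le> ?c\<^sup>2 + \<sigma>2"
    if "i \<in> I" for i
  proof -
    have shift: "(\<lambda>s. (real (length (take i v @ s @ drop (Suc i) v)) - d)\<^sup>2)
          = (\<lambda>s. (?c + real (length s) - \<tau>)\<^sup>2)"
      using that by (auto simp: I_def algebra_simps)
    have "measure_pmf.expectation (P (v ! i))
                 (\<lambda>s. (real (length (take i v @ s @ drop (Suc i) v)) - d)\<^sup>2)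
               = ?c\<^sup>2 + measure_pmf.expectation (P (v ! i)) (\<lambda>s. (real (length s) - \<tau>)\<^sup>2)"
      unfolding shift by (rule expectation_square_shift[OF fin mean])
    then show ?thesis using var by simp
  qed
  have "measure_pmf.expectation (mutation_step P v) (\<lambda>u. (real (length u) - d)\<^sup>2)
      = (\<Sum>i\<in>I. measure_pmf.expectation (P (v ! i))
              (\<lambda>s. (real (length (take i v @ s @ drop (Suc i) v)) - d)\<^sup>2)) / card I"
    unfolding mutation_step_def I_def[symmetric]
    using I by (simp add: expectation_bind_pmf_finite fin integral_pmf_of_set)
  also have "\<dots> \<le> (\<Sum>i\<in>I. ?c\<^sup>2 + \<sigma>2) / card I"
    by (intro divide_right_mono sum_mono letter) simp_all
  also have "\<dots> = ?c\<^sup>2 + \<sigma>2" using I by simp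
  finally show ?thesis .
qed

lemma mutation_system_mean_square:
  assumes law: "avg_mutation_law \<tau> P"
    and var: "\<And>a. measure_pmf.expectation (P a) (\<lambda>s. (real (length s) - \<tau>)\<^sup>2) \<le> \<sigma>2"
    and "w \<noteq> []"
  shows "measure_pmf.expectation (mutation_system P w n)
           (\<lambda>v. (real (length v) - real n * (\<tau> - 1) - real (length w))\<^sup>2) \<le> real n * \<sigma>2"
proof (induction n)
  case 0
  then show ?case by (simp add: mutation_system_def)
next
  case (Suc n)
  have "mutation_law P" using law by (simp add: avg_mutation_law_def)
  note fin = finite_set_pmf_mutation_system[OF this \<open>w \<noteq> []\<close>]
    and fin_step = finite_set_pmf_mutation_step[OF this]
    and nonempty = mutation_system_nonempty[OF this \<open>w \<noteq> []\<close>]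
  let ?S = "mutation_system P w n"
  let ?dev = "\<lambda>k v. (real (length v) - real k * (\<tau> - 1) - real (length w))\<^sup>2"
  have "measure_pmf.expectation (mutation_system P w (Suc n)) (?dev (Suc n))
      = measure_pmf.expectation ?S (\<lambda>v. measure_pmf.expectation (mutation_step P v) (?dev (Suc n)))"
    unfolding mutation_system_Suc
    by (intro expectation_bind_pmf_finite fin fin_step nonempty) simp_all
  also have "\<dots> \<le> measure_pmf.expectation ?S (\<lambda>v. ?dev n v + \<sigma>2)"
  proof (intro integral_mono_AE integrable_measure_pmf_finite fin, unfold AE_measure_pmf_iff, intro ballI)
    fix v assume "v \<in> set_pmf ?S"
    from mutation_step_mean_square[OF law var nonempty[OF this],
        where d = "real (Suc n) * (\<tau> - 1) + real (length w)"]
    show "measure_pmf.expectation (mutation_step P v) (?dev (Suc n)) \<le> ?dev n v + \<sigma>2"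
      by (simp add: algebra_simps diff_diff_eq)
  qed
  also have "\<dots> = measure_pmf.expectation ?S (?dev n) + \<sigma>2"
    by (simp add: integrable_measure_pmf_finite[OF fin])
  also have "\<dots> \<le> real (Suc n) * \<sigma>2"
    using Suc.IH by (simp add: algebra_simps)
  finally show ?case .
qed

lemma scaled_square_bound:
  fixes E B t n m :: real
  assumes "0 \<le> E" and "E \<le> n * B" and "0 < t" and "0 < n" and "0 \<le> m"
  shows "1 / (n * t + m)\<^sup>2 * E \<le> B / t\<^sup>2 / n"
proof -
  have "0 < n * t" using assms(3,4) by simp
  then have "0 < (n * t)\<^sup>2" and "(n * t)\<^sup>2 \<le> (n * t + m)\<^sup>2"
    using assms(5) by (auto intro: power_mono)
  then have "E / (n * t + m)\<^sup>2 \<le> n * B / (n * t)\<^sup>2"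
    using assms(1,2) by (intro frac_le) auto
  also have "\<dots> = B / t\<^sup>2 / n"
    using assms(3,4) by (simp add: field_simps power2_eq_square)
  finally show ?thesis by simp
qed

theorem mainTheorem11:
  fixes P :: "'a::finite \<Rightarrow> 'a list pmf" and w :: "'a list" and \<tau> :: real and m :: nat
  assumes "avg_mutation_law \<tau> P"
    and "\<tau> > 1"
    and "w \<noteq> []"
    and "length w = m"
  shows "\<exists>C0::real. \<forall>n::nat. n \<ge> 1 \<longrightarrow>
    (1 / (real n * (\<tau> - 1) + real m)^2) *
      measure_pmf.expectation (mutation_system P w n)
        (\<lambda>v. (real (length v) - real n * (\<tau> - 1) - real m)^2)
    \<le> C0 / real n"
proof -
  define \<sigma>2 where "\<sigma>2 = Max (range (\<lambda>a. measure_pmf.expectation (P a) (\<lambda>s. (real (length s) - \<tau>)\<^sup>2)))"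
  have var: "measure_pmf.expectation (P a) (\<lambda>s. (real (length s) - \<tau>)\<^sup>2) \<le> \<sigma>2" for a
    unfolding \<sigma>2_def by (rule Max_ge) simp_all
  show ?thesis
  proof (intro exI[of _ "\<sigma>2 / (\<tau> - 1)\<^sup>2"] allI impI)
    fix n :: nat assume "n \<ge> 1"
    then show "1 / (real n * (\<tau> - 1) + real m)\<^sup>2 *
        measure_pmf.expectation (mutation_system P w n)
          (\<lambda>v. (real (length v) - real n * (\<tau> - 1) - real m)\<^sup>2)
      \<le> \<sigma>2 / (\<tau> - 1)\<^sup>2 / real n"
      using mutation_system_mean_square[OF assms(1) var assms(3), of n] assms(2,4)
      by (intro scaled_square_bound integral_nonneg_AE) auto
  qed
qed

end
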